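(* Let $\bm\sigma=\sigma_1\bm e_1+\dots+\sigma_r\bm e_r\in\mathbb{Z}^r$ be a changemaker vector such that $L=\langle\bm\sigma\rangle^\perp\subseteq\mathbb{Z}^r$ admits an obtuse superbase. Suppose that for some $\ell\ge4$ and some $b>1$ the coefficients satisfy $\sigma_{b-1}<\sigma_b=\sigma_{b+1}=\dots=\sigma_{b+\ell-1}$. Then every $\sigma_k$ with $\sigma_k>\sigma_b$ satisfies $\sigma_k\ge(\ell-1)\sigma_b$.
   Context: $\mathbb{Z}^r$ has the standard pairing. A changemaker vector is $\bm\sigma=\sum\sigma_i\bm e_i$ with $\sigma_1=1$ and $\sigma_{i-1}\le\sigma_i\le1+\sigma_1+\dots+\sigma_{i-1}$ for $i\ge2$. An obtuse superbase of a rank-$k$ lattice is a spanning set $\{v_0,\dots,v_k\}$ with $v_i\cdot v_j\le0$ for $i\ne j$ and $\sum v_i=0$. *)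

theory Defs
  imports Main
begin

text \<open>Vectors of Z^r are represented as functions nat => int supported on {1..r};
  e_i is the i-th coordinate.\<close>

definition zvec :: "nat \<Rightarrow> (nat \<Rightarrow> int) set" where
  "zvec r = {v. \<forall>i. i \<notin> {1..r} \<longrightarrow> v i = 0}"

definition pairing :: "nat \<Rightarrow> (nat \<Rightarrow> int) \<Rightarrow> (nat \<Rightarrow> int) \<Rightarrow> int" where
  "pairing r v w = (\<Sum>i=1..r. v i * w i)"

definition changemaker :: "nat \<Rightarrow> (nat \<Rightarrow> int) \<Rightarrow> bool" where
  "changemaker r \<sigma> \<longleftrightarrow> \<sigma> \<in> zvec r \<and> r \<ge> 1 \<and> \<sigma> 1 = 1 \<and>
     (\<forall>i\<in>{2..r}. \<sigma> (i - 1) \<le> \<sigma> i \<and> \<sigma> i \<le> 1 + (\<Sum>j=1..<i. \<sigma> j))"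

definition orth_lattice :: "nat \<Rightarrow> (nat \<Rightarrow> int) \<Rightarrow> (nat \<Rightarrow> int) set" where
  "orth_lattice r \<sigma> = {v \<in> zvec r. pairing r v \<sigma> = 0}"

definition int_span :: "nat \<Rightarrow> (nat \<Rightarrow> nat \<Rightarrow> int) \<Rightarrow> (nat \<Rightarrow> int) set" where
  "int_span k v = {x. \<exists>c :: nat \<Rightarrow> int. x = (\<lambda>i. \<Sum>j\<le>k. c j * v j i)}"

definition obtuse_superbase :: "nat \<Rightarrow> nat \<Rightarrow> (nat \<Rightarrow> int) set \<Rightarrow> (nat \<Rightarrow> nat \<Rightarrow> int) \<Rightarrow> bool" where
  "obtuse_superbase r k L v \<longleftrightarrow>
     int_span k v = L \<and>
     (\<forall>i\<le>k. \<forall>j\<le>k. i \<noteq> j \<longrightarrow> pairing r (v i) (v j) \<le> 0) \<and>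
     (\<lambda>t. \<Sum>i\<le>k. v i t) = (\<lambda>_. 0)"

text \<open>L = sigma^perp has rank r - 1 (sigma is nonzero since sigma_1 = 1).\<close>
definition admits_obtuse_superbase :: "nat \<Rightarrow> (nat \<Rightarrow> int) \<Rightarrow> bool" where
  "admits_obtuse_superbase r \<sigma> \<longleftrightarrow>
     (\<exists>v. obtuse_superbase r (r - 1) (orth_lattice r \<sigma>) v)"

end

theory Submission
  imports Defs "HOL-Library.Function_Algebras" "HOL-Library.Indicator_Function"
begin

text \<open>Let v_u (u \<in> U) be an obtuse superbase of the orthogonal complement L of \<sigma>; merging
  parts that sum to zero, we may assume no proper nonempty part sums to zero. Then the only
  relations among the v_u are the constant ones, and an irreducible x \<in> L (one that is not
  y + z with y, z \<noteq> 0 and y \<cdot> z \<ge> 0) has coefficients taking two consecutive values, i.e. it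
  is the sum of the v_u over a subset.

  If \<sigma>_b < \<sigma>_k < (\<ell> - 1) \<sigma>_b, the changemaker property yields sets N, P of indices outside
  b, ..., b + 3 with \<sigma>_k + \<sigma>(P) = 2 \<sigma>_b + \<sigma>(N), and for w = e_k - e_N + e_P all vectors
  w - e_{b+a} - e_{b+c} and e_{b+a} - e_{b+c} (a \<noteq> c < 4) are irreducible. Ordering the
  coefficient functions of the e_{b+a} along the chain of subsets their differences define, a
  finite case analysis shows that some w - e_{b+a} - e_{b+c} has constant coefficients, so it
  vanishes, a contradiction.\<close>

section \<open>Integer combinations and the standard pairing\<close>

definition lincomb :: "'a set \<Rightarrow> ('a \<Rightarrow> int) \<Rightarrow> ('a \<Rightarrow> nat \<Rightarrow> int) \<Rightarrow> nat \<Rightarrow> int" where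
  "lincomb U c v = (\<lambda>t. \<Sum>u\<in>U. c u * v u t)"

lemma pairing_commute: "pairing r x y = pairing r y x"
  unfolding pairing_def by (simp add: mult.commute)

lemma pairing_add_left: "pairing r (x + y) z = pairing r x z + pairing r y z"
  unfolding pairing_def by (simp add: algebra_simps sum.distrib)

lemma pairing_diff_left: "pairing r (x - y) z = pairing r x z - pairing r y z"
  unfolding pairing_def by (simp add: algebra_simps sum_subtractf)

lemma pairing_zero_left [simp]: "pairing r 0 y = 0"
  unfolding pairing_def by simp

lemma pairing_lincomb_left: "pairing r (lincomb U c v) y = (\<Sum>u\<in>U. c u * pairing r (v u) y)"
  unfolding pairing_def lincomb_def
  by (simp add: sum_distrib_left sum_distrib_right mult.assoc sum.swap[of _ U])

lemma pairing_indicator_left: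
  assumes "A \<subseteq> {1..r}"
  shows "pairing r (indicator A) y = sum y A"
proof -
  have "pairing r (indicator A) y = (\<Sum>p\<in>{1..r}. if p \<in> A then y p else 0)"
    unfolding pairing_def by (intro sum.cong) (auto simp: indicator_def)
  also have "\<dots> = sum y A"
    using assms by (simp add: sum.inter_restrict[symmetric] Int_absorb1)
  finally show ?thesis .
qed

lemma pairing_self_nonneg: "0 \<le> pairing r x x"
  unfolding pairing_def by (intro sum_nonneg) simp

lemma pairing_self_eq_0:
  assumes "x \<in> zvec r" "pairing r x x = 0"
  shows "x = 0"
proof
  fix t
  have "\<forall>i\<in>{1..r}. x i * x i = 0"
    using assms(2) unfolding pairing_def by (subst (asm) sum_nonneg_eq_0_iff) auto
  then show "x t = 0 t"
    using assms(1) unfolding zvec_def by (cases "t \<in> {1..r}") auto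
qed

lemma lincomb_add: "lincomb U (c + d) v = lincomb U c v + lincomb U d v"
  unfolding lincomb_def by (simp add: fun_eq_iff algebra_simps sum.distrib)

lemma lincomb_diff: "lincomb U (c - d) v = lincomb U c v - lincomb U d v"
  unfolding lincomb_def by (simp add: fun_eq_iff algebra_simps sum_subtractf)

lemma lincomb_scale: "lincomb U (\<lambda>u. k * c u) v = (\<lambda>t. k * lincomb U c v t)"
  unfolding lincomb_def by (simp add: sum_distrib_left mult.assoc)

lemma lincomb_indicator:
  assumes "finite U" "A \<subseteq> U"
  shows "lincomb U (indicator A) v = lincomb A (\<lambda>_. 1) v"
proof
  fix t
  have "lincomb U (indicator A) v t = (\<Sum>u\<in>U. if u \<in> A then v u t else 0)"
    unfolding lincomb_def by (intro sum.cong) (auto simp: indicator_def)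
  also have "\<dots> = lincomb A (\<lambda>_. 1) v t"
    unfolding lincomb_def using assms by (simp add: sum.inter_restrict[symmetric] Int_absorb1)
  finally show "lincomb U (indicator A) v t = lincomb A (\<lambda>_. 1) v t" .
qed

lemma lincomb_merge:
  assumes "finite U" "a \<in> U" "b \<in> U" "a \<noteq> b" "d a = d b"
  shows "lincomb (U - {b}) d (v(a := v a + v b)) = lincomb U d v"
proof
  fix t
  have "lincomb (U - {b}) d (v(a := v a + v b)) t
      = (\<Sum>u\<in>U - {b}. d u * v u t + (if u = a then d b * v b t else 0))"
    unfolding lincomb_def using assms(5) by (intro sum.cong) (auto simp: algebra_simps)
  also have "\<dots> = (\<Sum>u\<in>U - {b}. d u * v u t) + d b * v b t"
    using assms by (simp add: sum.distrib)
  also have "\<dots> = lincomb U d v t"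
    unfolding lincomb_def using assms by (simp add: sum.remove[of U b])
  finally show "lincomb (U - {b}) d (v(a := v a + v b)) t = lincomb U d v t" .
qed

lemma indicator_in_zvec: "A \<subseteq> {1..r} \<Longrightarrow> indicator A \<in> zvec r"
  unfolding zvec_def indicator_def by auto

lemma zvec_add: "x \<in> zvec r \<Longrightarrow> y \<in> zvec r \<Longrightarrow> x + y \<in> zvec r"
  and zvec_diff: "x \<in> zvec r \<Longrightarrow> y \<in> zvec r \<Longrightarrow> x - y \<in> zvec r"
  unfolding zvec_def by auto

lemma orth_lattice_add: "x \<in> orth_lattice r \<sigma> \<Longrightarrow> y \<in> orth_lattice r \<sigma> \<Longrightarrow> x + y \<in> orth_lattice r \<sigma>"
  unfolding orth_lattice_def by (auto simp: zvec_add pairing_add_left)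

lemma zero_in_orth_lattice: "0 \<in> orth_lattice r \<sigma>"
  unfolding orth_lattice_def zvec_def by simp

lemma lincomb_in_orth_lattice:
  assumes "\<And>u. u \<in> U \<Longrightarrow> v u \<in> orth_lattice r \<sigma>"
  shows "lincomb U c v \<in> orth_lattice r \<sigma>"
proof -
  have "v u i = 0" if "u \<in> U" "i \<notin> {1..r}" for u i
    using assms[OF that(1)] that(2) unfolding orth_lattice_def zvec_def by blast
  then have "lincomb U c v \<in> zvec r"
    unfolding zvec_def lincomb_def by simp
  moreover have "pairing r (lincomb U c v) \<sigma> = 0"
    using assms unfolding pairing_lincomb_left orth_lattice_def by simp
  ultimately show ?thesis unfolding orth_lattice_def by simp
qed

definition orth_irreducible :: "nat \<Rightarrow> (nat \<Rightarrow> int) \<Rightarrow> (nat \<Rightarrow> int) \<Rightarrow> bool" where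
  "orth_irreducible r \<sigma> x \<longleftrightarrow> x \<in> orth_lattice r \<sigma> \<and> x \<noteq> 0 \<and>
     (\<forall>y\<in>orth_lattice r \<sigma>. \<forall>z\<in>orth_lattice r \<sigma>. x = y + z \<longrightarrow> y \<noteq> 0 \<longrightarrow> z \<noteq> 0 \<longrightarrow> pairing r y z < 0)"

definition almost_constant_on :: "'a set \<Rightarrow> ('a \<Rightarrow> int) \<Rightarrow> bool" where
  "almost_constant_on U f \<longleftrightarrow> (\<forall>u\<in>U. \<forall>w\<in>U. \<bar>f u - f w\<bar> \<le> 1)"

section \<open>Obtuse superbases of the orthogonal lattice\<close>

text \<open>An obtuse superbase of the lattice orthogonal to \<sigma>, indexed by an arbitrary finite set so
  that it can shrink when parts summing to zero are merged.\<close>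

locale orth_superbase =
  fixes r :: nat and \<sigma> :: "nat \<Rightarrow> int" and U :: "'a set" and v :: "'a \<Rightarrow> nat \<Rightarrow> int"
  assumes finite_index: "finite U"
    and in_orth_lattice: "u \<in> U \<Longrightarrow> v u \<in> orth_lattice r \<sigma>"
    and spanning: "x \<in> orth_lattice r \<sigma> \<Longrightarrow> \<exists>c. x = lincomb U c v"
    and obtuse: "u \<in> U \<Longrightarrow> w \<in> U \<Longrightarrow> u \<noteq> w \<Longrightarrow> pairing r (v u) (v w) \<le> 0"
    and sum_eq_0: "lincomb U (\<lambda>_. 1) v = 0"
begin

lemma lincomb_constant_eq_0:
  assumes "\<And>u w. u \<in> U \<Longrightarrow> w \<in> U \<Longrightarrow> c u = c w"
  shows "lincomb U c v = 0"
proof (cases "U = {}")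
  case True
  then show ?thesis unfolding lincomb_def zero_fun_def by simp
next
  case False
  then obtain u0 where u0: "u0 \<in> U" by blast
  have "lincomb U c v t = c u0 * lincomb U (\<lambda>_. 1) v t" for t
    unfolding lincomb_def sum_distrib_left using assms[OF _ u0] by (intro sum.cong) auto
  then show ?thesis using sum_eq_0 by (simp add: fun_eq_iff)
qed

lemma lincomb_nonzero_imp_nonconstant:
  assumes "lincomb U c v \<noteq> 0"
  shows "\<exists>u\<in>U. \<exists>w\<in>U. c u \<noteq> c w"
  using lincomb_constant_eq_0 assms by blast

lemma sum_pairing_eq_0: "(\<Sum>u\<in>U. pairing r (v u) y) = 0"
  using pairing_lincomb_left[of r U "\<lambda>_. 1" v y] sum_eq_0 by simp

lemma pairing_lincomb_nonpos:
  assumes "A \<subseteq> U" "u \<in> U - A"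
  shows "pairing r (v u) (lincomb A (\<lambda>_. 1) v) \<le> 0"
  using assms
  by (auto simp: pairing_commute[of r "v u"] pairing_lincomb_left intro!: sum_nonpos obtuse)

text \<open>Shifting all coefficients by M - 1, where M is their maximum, does not change the pairing
  since the v_u sum to zero; afterwards every term outside the top level set is a product of two
  nonpositive numbers.\<close>

lemma pairing_top_level_ge:
  fixes c :: "'a \<Rightarrow> int"
  defines "A \<equiv> {u \<in> U. c u = Max (c ` U)}"
  shows "pairing r (lincomb A (\<lambda>_. 1) v) (lincomb A (\<lambda>_. 1) v)
           \<le> pairing r (lincomb U c v) (lincomb A (\<lambda>_. 1) v)"
proof (cases "U = {}")
  case True
  then show ?thesis unfolding A_def lincomb_def by (simp add: zero_fun_def)
next
  case False
  define M where "M = Max (c ` U)"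
  define X where "X = lincomb A (\<lambda>_. 1) v"
  define \<pi> where "\<pi> u = pairing r (v u) X" for u
  have le_M: "c u \<le> M" if "u \<in> U" for u
    unfolding M_def using finite_index that by simp
  have AU: "A \<subseteq> U" unfolding A_def by auto
  have "X = lincomb U (indicator A) v"
    unfolding X_def using lincomb_indicator[OF finite_index AU] by simp
  then have "pairing r X X = (\<Sum>u\<in>U. indicator A u * \<pi> u)"
    unfolding \<pi>_def by (simp add: pairing_lincomb_left)
  also have "\<dots> \<le> (\<Sum>u\<in>U. (c u - (M - 1)) * \<pi> u)"
  proof (rule sum_mono)
    fix u assume u: "u \<in> U"
    show "indicator A u * \<pi> u \<le> (c u - (M - 1)) * \<pi> u"
    proof (cases "u \<in> A")
      case True
      then show ?thesis unfolding A_def M_def by simp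
    next
      case False
      then have "\<pi> u \<le> 0" "c u - (M - 1) \<le> 0"
        using pairing_lincomb_nonpos[OF AU] le_M[OF u] u
        unfolding \<pi>_def X_def A_def M_def by auto
      then show ?thesis using False by (simp add: mult_nonpos_nonpos)
    qed
  qed
  also have "\<dots> = (\<Sum>u\<in>U. c u * \<pi> u) - (M - 1) * (\<Sum>u\<in>U. \<pi> u)"
    by (simp add: algebra_simps sum.distrib sum_subtractf sum_distrib_left)
  also have "\<dots> = pairing r (lincomb U c v) X"
    using sum_pairing_eq_0 unfolding \<pi>_def by (simp add: pairing_lincomb_left)
  finally show ?thesis unfolding X_def .
qed

end

text \<open>Equivalently, the graph on U joining u and w when v_u \<cdot> v_w < 0 is connected.\<close>

locale connected_orth_superbase = orth_superbase +
  assumes connected: "C \<subseteq> U \<Longrightarrow> C \<noteq> {} \<Longrightarrow> C \<noteq> U \<Longrightarrow> lincomb C (\<lambda>_. 1) v \<noteq> 0"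
begin

lemma top_level_set_eq_U_if_sum_eq_0:
  assumes "u \<in> U" and "lincomb {u \<in> U. c u = Max (c ` U)} (\<lambda>_. 1) v = 0"
  shows "{u \<in> U. c u = Max (c ` U)} = U"
proof -
  have "Max (c ` U) \<in> c ` U" using finite_index assms(1) by (intro Max_in) auto
  then have "{u \<in> U. c u = Max (c ` U)} \<noteq> {}" by auto
  then show ?thesis using connected[of "{u \<in> U. c u = Max (c ` U)}"] assms(2) by blast
qed

lemma lincomb_eq_0_imp_constant:
  assumes "lincomb U c v = 0" "u \<in> U" "w \<in> U"
  shows "c u = c w"
proof -
  define A where "A = {u \<in> U. c u = Max (c ` U)}"
  define X where "X = lincomb A (\<lambda>_. 1) v"
  have "pairing r X X \<le> 0"
    using pairing_top_level_ge[of c] assms(1) unfolding A_def X_def by simp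
  then have "pairing r X X = 0" using pairing_self_nonneg[of r X] by simp
  moreover have "X \<in> zvec r"
    using lincomb_in_orth_lattice[of A v r \<sigma>] in_orth_lattice
    unfolding X_def A_def orth_lattice_def by auto
  ultimately have "X = 0" using pairing_self_eq_0 by blast
  then have "A = U" using top_level_set_eq_U_if_sum_eq_0 assms(2) unfolding A_def X_def by blast
  then show ?thesis using assms(2,3) unfolding A_def by (metis (mono_tags, lifting) mem_Collect_eq)
qed

text \<open>With y the sum over the top level set of the coefficients, x = y + z and y \<cdot> z \<ge> 0 by
  pairing_top_level_ge, so irreducibility forces z = 0.\<close>

lemma orth_irreducible_eq_top_level:
  assumes irr: "orth_irreducible r \<sigma> x" and x: "x = lincomb U c v"
    and u: "u \<in> U" "c u \<noteq> Max (c ` U)"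
  shows "lincomb U (c - indicator {u \<in> U. c u = Max (c ` U)}) v = 0"
proof -
  define A where "A = {u \<in> U. c u = Max (c ` U)}"
  define y where "y = lincomb A (\<lambda>_. 1) v"
  define z where "z = lincomb U (c - indicator A) v"
  have AU: "A \<subseteq> U" unfolding A_def by auto
  have y_alt: "y = lincomb U (indicator A) v"
    unfolding y_def using lincomb_indicator[OF finite_index AU] by simp
  have y_nonzero: "y \<noteq> 0"
    using top_level_set_eq_U_if_sum_eq_0[OF u(1)] u unfolding y_def A_def by blast
  have x_split: "x = y + z"
    unfolding x y_alt z_def lincomb_diff by simp
  have yz_orth: "y \<in> orth_lattice r \<sigma>" "z \<in> orth_lattice r \<sigma>"
    unfolding y_def z_def using AU by (auto intro!: lincomb_in_orth_lattice in_orth_lattice)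
  have "pairing r y z = pairing r z y" by (rule pairing_commute)
  also have "\<dots> = pairing r x y - pairing r y y"
    unfolding z_def lincomb_diff pairing_diff_left x y_alt ..
  finally have "0 \<le> pairing r y z"
    using pairing_top_level_ge[of c] unfolding x y_def A_def by simp
  then have "z = 0"
  proof (rule contrapos_pp)
    assume "z \<noteq> 0"
    then show "\<not> 0 \<le> pairing r y z"
      using irr x_split yz_orth y_nonzero unfolding orth_irreducible_def by (simp add: not_le)
  qed
  then show ?thesis unfolding z_def A_def .
qed

lemma orth_irreducible_coeffs_almost_constant:
  assumes irr: "orth_irreducible r \<sigma> x" and x: "x = lincomb U c v"
  shows "almost_constant_on U c"
  unfolding almost_constant_on_def
proof (intro ballI)
  fix u w assume uw: "u \<in> U" "w \<in> U"
  show "\<bar>c u - c w\<bar> \<le> 1"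
  proof (cases "\<forall>u\<in>U. c u = Max (c ` U)")
    case True
    then show ?thesis using uw by simp
  next
    case False
    define A where "A = {u \<in> U. c u = Max (c ` U)}"
    have "lincomb U (c - indicator A) v = 0"
      using orth_irreducible_eq_top_level[OF irr x] False unfolding A_def by blast
    then have "(c - indicator A) u = (c - indicator A) w"
      using lincomb_eq_0_imp_constant[OF _ uw] by blast
    then have "c u - c w = indicator A u - indicator A w" by simp
    then show ?thesis by (simp add: indicator_def)
  qed
qed

end

context orth_superbase
begin

lemma merge_zero_sum_part:
  assumes C: "C \<subseteq> U" "C \<noteq> {}" "C \<noteq> U" and C_sum: "lincomb C (\<lambda>_. 1) v = 0"
  obtains U' :: "'a set" and v' where "orth_superbase r \<sigma> U' v'" "card U' < card U"
proof -
  obtain a b where ab: "a \<in> C" "b \<in> U" "b \<notin> C" using C by blast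
  then have a: "a \<in> U" "a \<noteq> b" using C by auto
  define U' where "U' = U - {b}"
  define v' where "v' = v(a := v a + v b)"
  have merge: "lincomb U' d v' = lincomb U d v" if "d a = d b" for d
    unfolding U'_def v'_def using lincomb_merge[OF finite_index a(1) ab(2) a(2) that] .
  have "orth_superbase r \<sigma> U' v'"
  proof
    show "finite U'" unfolding U'_def using finite_index by simp
  next
    fix u assume "u \<in> U'"
    then show "v' u \<in> orth_lattice r \<sigma>"
      unfolding U'_def v'_def using a ab by (auto intro: orth_lattice_add in_orth_lattice)
  next
    fix x assume "x \<in> orth_lattice r \<sigma>"
    then obtain c where x: "x = lincomb U c v" using spanning by blast
    text \<open>The complement of C also sums to zero, so the coefficients may be shifted on it
      until they agree at a and b.\<close>
    have "lincomb (U - C) (\<lambda>_. 1) v = lincomb U (indicator (U - C)) v"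
      using lincomb_indicator[OF finite_index, of "U - C"] by simp
    moreover have "lincomb (U - C) (\<lambda>_. 1) v = 0"
      using sum_eq_0 C_sum finite_index C(1)
      by (simp add: lincomb_def fun_eq_iff sum_diff finite_subset)
    ultimately have "lincomb U (c + (\<lambda>u. (c a - c b) * indicator (U - C) u)) v = x"
      unfolding lincomb_add lincomb_scale x by (simp add: fun_eq_iff)
    moreover have "(c + (\<lambda>u. (c a - c b) * indicator (U - C) u)) a
        = (c + (\<lambda>u. (c a - c b) * indicator (U - C) u)) b"
      using ab a by simp
    ultimately show "\<exists>c. x = lincomb U' c v'" using merge by metis
  next
    fix u w assume uw: "u \<in> U'" "w \<in> U'" "u \<noteq> w"
    have b_obtuse: "pairing r (v b) (v y) \<le> 0" if "y \<in> U'" for y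
      using that ab unfolding U'_def by (auto intro: obtuse)
    show "pairing r (v' u) (v' w) \<le> 0"
    proof (cases "u = a \<or> w = a")
      case True
      then obtain y where y: "{u, w} = {a, y}" "y \<in> U'" "y \<noteq> a" using uw by blast
      then have "pairing r (v a) (v y) \<le> 0" using a unfolding U'_def by (auto intro: obtuse)
      then have "pairing r (v' a) (v' y) \<le> 0"
        using b_obtuse[OF y(2)] y(3) unfolding v'_def by (simp add: pairing_add_left)
      then show ?thesis using y(1) pairing_commute by (metis doubleton_eq_iff)
    next
      case False
      then show ?thesis using uw unfolding v'_def U'_def by (auto intro: obtuse)
    qed
  next
    show "lincomb U' (\<lambda>_. 1) v' = 0" using merge[of "\<lambda>_. 1"] sum_eq_0 by simp
  qed
  moreover have "card U' < card U"
    unfolding U'_def using finite_index ab(2) by (meson card_Diff1_less)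
  ultimately show ?thesis using that by blast
qed

lemma ex_connected_orth_superbase:
  "\<exists>U' (v' :: 'a \<Rightarrow> nat \<Rightarrow> int). connected_orth_superbase r \<sigma> U' v'"
  using orth_superbase_axioms
proof (induction "card U" arbitrary: U v rule: less_induct)
  case less
  then interpret orth_superbase r \<sigma> U v by simp
  show ?case
  proof (cases "\<forall>C. C \<subseteq> U \<longrightarrow> C \<noteq> {} \<longrightarrow> C \<noteq> U \<longrightarrow> lincomb C (\<lambda>_. 1) v \<noteq> 0")
    case True
    then have "connected_orth_superbase r \<sigma> U v"
      by unfold_locales blast
    then show ?thesis by blast
  next
    case False
    then obtain C where "C \<subseteq> U" "C \<noteq> {}" "C \<noteq> U" "lincomb C (\<lambda>_. 1) v = 0" by blast
    then obtain U' :: "'a set" and v' where "orth_superbase r \<sigma> U' v'" "card U' < card U"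
      by (rule merge_zero_sum_part)
    then show ?thesis using less.hyps by blast
  qed
qed

end

lemma orth_superbase_if_obtuse_superbase:
  assumes "obtuse_superbase r k (orth_lattice r \<sigma>) v"
  shows "orth_superbase r \<sigma> {..k} v"
proof -
  have span: "orth_lattice r \<sigma> = {x. \<exists>c. x = lincomb {..k} c v}"
    using assms unfolding obtuse_superbase_def int_span_def lincomb_def by simp
  show ?thesis
  proof
    fix u assume u: "u \<in> {..k}"
    have "lincomb {..k} (indicator {u}) v = v u"
      using lincomb_indicator[of "{..k}" "{u}" v] u by (simp add: lincomb_def)
    then show "v u \<in> orth_lattice r \<sigma>" unfolding span by (auto intro!: exI[of _ "indicator {u}"])
  next
    show "lincomb {..k} (\<lambda>_. 1) v = 0"
      using assms unfolding obtuse_superbase_def lincomb_def zero_fun_def by simp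
  qed (use assms span in \<open>auto simp: obtuse_superbase_def\<close>)
qed

lemma ex_connected_orth_superbase_if_admits:
  assumes "admits_obtuse_superbase r \<sigma>"
  obtains U :: "nat set" and v where "connected_orth_superbase r \<sigma> U v"
proof -
  obtain v where "obtuse_superbase r (r - 1) (orth_lattice r \<sigma>) v"
    using assms unfolding admits_obtuse_superbase_def by blast
  then interpret orth_superbase r \<sigma> "{..r - 1}" v by (rule orth_superbase_if_obtuse_superbase)
  show ?thesis using ex_connected_orth_superbase that by blast
qed

section \<open>Irreducible vectors with entries in {-1, 0, 1}\<close>

lemma sign_vector_part_ne_minus_one:
  assumes w: "w \<in> orth_lattice r \<sigma>" "w k = 0" and part: "\<And>p. w p = 0 \<or> w p = x p"
    and signs: "\<And>p. x p \<in> {-1, 0, 1}"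
    and pos: "\<And>p. p \<in> {1..r} \<Longrightarrow> 0 < \<sigma> p"
    and small: "\<And>p. p \<in> {1..r} \<Longrightarrow> x p = -1 \<Longrightarrow> sum \<sigma> {q \<in> {1..r}. q \<noteq> k \<and> x q = 1} < \<sigma> p"
    and p: "p \<in> {1..r}"
  shows "w p \<noteq> -1"
proof
  assume wp: "w p = -1"
  then have xp: "x p = -1" using part[of p] by auto
  define P where "P = {q \<in> {1..r}. q \<noteq> k \<and> x q = 1}"
  have P_r: "P \<subseteq> {1..r}" unfolding P_def by auto
  have "pairing r w \<sigma> \<le> pairing r (indicator P - indicator {p}) \<sigma>"
    unfolding pairing_def
  proof (rule sum_mono)
    fix q assume q: "q \<in> {1..r}"
    have "w q \<in> {-1, 0, 1}" using part[of q] signs[of q] by auto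
    moreover have "w q = 1 \<Longrightarrow> q \<in> P" using part[of q] w(2) q unfolding P_def by auto
    moreover have "p \<notin> P" using xp unfolding P_def by auto
    ultimately show "w q * \<sigma> q \<le> (indicator P - indicator {p}) q * \<sigma> q"
      using pos[OF q] wp by (auto simp: indicator_def)
  qed
  also have "\<dots> = sum \<sigma> P - \<sigma> p"
    using P_r p by (simp add: pairing_diff_left pairing_indicator_left)
  also have "\<dots> < 0" using small[OF p xp] unfolding P_def by simp
  finally show False using w(1) unfolding orth_lattice_def by simp
qed

lemma sign_vector_part_eq_0:
  assumes w: "w \<in> orth_lattice r \<sigma>" "w k = 0" and part: "\<And>p. w p = 0 \<or> w p = x p"
    and signs: "\<And>p. x p \<in> {-1, 0, 1}"
    and pos: "\<And>p. p \<in> {1..r} \<Longrightarrow> 0 < \<sigma> p"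
    and small: "\<And>p. p \<in> {1..r} \<Longrightarrow> x p = -1 \<Longrightarrow> sum \<sigma> {q \<in> {1..r}. q \<noteq> k \<and> x q = 1} < \<sigma> p"
  shows "w = 0"
proof
  fix p
  have w_zvec: "w \<in> zvec r" and w_orth: "pairing r w \<sigma> = 0"
    using w(1) unfolding orth_lattice_def by auto
  have nonneg: "0 \<le> w q * \<sigma> q" if q: "q \<in> {1..r}" for q
  proof -
    have "w q \<noteq> -1" by (rule sign_vector_part_ne_minus_one[OF assms q])
    then have "w q \<in> {0, 1}" using part[of q] signs[of q] by auto
    then show ?thesis using pos[OF q] by auto
  qed
  show "w p = 0 p"
  proof (cases "p \<in> {1..r}")
    case True
    then have "w p * \<sigma> p = 0"
      using w_orth nonneg unfolding pairing_def by (subst (asm) sum_nonneg_eq_0_iff) auto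
    then show ?thesis using pos[OF True] by simp
  next
    case False
    then show ?thesis using w_zvec unfolding zvec_def by simp
  qed
qed

text \<open>In a splitting y + z with nonnegative pairing the parts have disjoint supports, and the
  part vanishing at k is zero by the previous lemma.\<close>

lemma orth_irreducible_sign_vector:
  assumes x: "x \<in> orth_lattice r \<sigma>" "k \<in> {1..r}" "x k = 1"
    and signs: "\<And>p. x p \<in> {-1, 0, 1}"
    and pos: "\<And>p. p \<in> {1..r} \<Longrightarrow> 0 < \<sigma> p"
    and small: "\<And>p. p \<in> {1..r} \<Longrightarrow> x p = -1 \<Longrightarrow> sum \<sigma> {q \<in> {1..r}. q \<noteq> k \<and> x q = 1} < \<sigma> p"
  shows "orth_irreducible r \<sigma> x"
  unfolding orth_irreducible_def
proof (intro conjI ballI impI)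
  show "x \<in> orth_lattice r \<sigma>" by (fact x(1))
  show "x \<noteq> 0"
  proof
    assume "x = 0"
    then show False using x(3) by simp
  qed
next
  fix y z assume yz: "y \<in> orth_lattice r \<sigma>" "z \<in> orth_lattice r \<sigma>" "x = y + z" "y \<noteq> 0" "z \<noteq> 0"
  show "pairing r y z < 0"
  proof (rule ccontr)
    assume "\<not> pairing r y z < 0"
    then have nonneg: "0 \<le> (\<Sum>p\<in>{1..r}. y p * z p)" unfolding pairing_def by simp
    have yz_p: "y p + z p = x p" for p using yz(3) by simp
    have nonpos: "y p * z p \<le> 0" for p
      using signs[of p] yz_p[of p] by (auto simp: mult_le_0_iff)
    have "y p * z p = 0" if "p \<in> {1..r}" for p
    proof -
      have "(\<Sum>p\<in>{1..r}. - (y p * z p)) = 0"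
        using nonneg sum_nonpos[of "{1..r}" "\<lambda>p. y p * z p"] nonpos by (simp add: sum_negf)
      then show ?thesis using that nonpos by (subst (asm) sum_nonneg_eq_0_iff) auto
    qed
    moreover have "y p = 0 \<and> z p = 0" if "p \<notin> {1..r}" for p
      using that yz(1,2) unfolding orth_lattice_def zvec_def by auto
    ultimately have parts: "y p = 0 \<or> y p = x p" "z p = 0 \<or> z p = x p" for p
      using yz_p[of p] by (metis add.left_neutral add.right_neutral mult_eq_0_iff)+
    have "y k = 0 \<or> z k = 0" using \<open>\<And>p. p \<in> {1..r} \<Longrightarrow> y p * z p = 0\<close> x(2) by simp
    then show False
      using sign_vector_part_eq_0[OF yz(1) _ parts(1) signs pos small]
        sign_vector_part_eq_0[OF yz(2) _ parts(2) signs pos small] yz(4,5) by blast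
  qed
qed

lemma orth_irreducible_indicator_diff:
  assumes "i \<in> {1..r}" "j \<in> {1..r}" "i \<noteq> j" "\<sigma> i = \<sigma> j"
    and pos: "\<And>p. p \<in> {1..r} \<Longrightarrow> 0 < \<sigma> p"
  shows "orth_irreducible r \<sigma> (indicator {i} - indicator {j})"
proof (rule orth_irreducible_sign_vector[where k = i])
  show "indicator {i} - indicator {j} \<in> orth_lattice r \<sigma>"
    using assms unfolding orth_lattice_def
    by (simp add: zvec_diff indicator_in_zvec pairing_diff_left pairing_indicator_left)
  have no_plus: "{q \<in> {1..r}. q \<noteq> i \<and> (indicator {i} - indicator {j}) q = (1 :: int)} = {}"
    by (auto simp: indicator_def)
  show "sum \<sigma> {q \<in> {1..r}. q \<noteq> i \<and> (indicator {i} - indicator {j}) q = (1 :: int)} < \<sigma> p"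
    if "p \<in> {1..r}" for p
    unfolding no_plus using pos[OF that] by simp
  show "i \<in> {1..r}" by (fact assms(1))
  show "(indicator {i} - indicator {j}) i = (1 :: int)" using assms(3) by simp
  show "(indicator {i} - indicator {j}) p \<in> {-1, 0, 1 :: int}" for p by (simp add: indicator_def)
  show "0 < \<sigma> p" if "p \<in> {1..r}" for p using pos that .
qed

lemma orth_irreducible_balanced:
  assumes ijk: "k \<in> {1..r}" "i \<in> {1..r}" "j \<in> {1..r}" "k \<noteq> i" "k \<noteq> j" "i \<noteq> j"
    and NP: "N \<subseteq> {1..r} - {k, i, j}" "P \<subseteq> {1..r} - {k, i, j}" "N \<inter> P = {}"
    and balanced: "\<sigma> k + sum \<sigma> P = \<sigma> i + \<sigma> j + sum \<sigma> N"
    and small: "sum \<sigma> P < \<sigma> i" "sum \<sigma> P < \<sigma> j" "\<And>p. p \<in> N \<Longrightarrow> sum \<sigma> P < \<sigma> p"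
    and pos: "\<And>p. p \<in> {1..r} \<Longrightarrow> 0 < \<sigma> p"
  shows "orth_irreducible r \<sigma>
           (indicator {k} - indicator N + indicator P - indicator {i} - indicator {j})"
    (is "orth_irreducible r \<sigma> ?x")
proof -
  have x_val: "?x p = of_bool (p = k \<or> p \<in> P) - of_bool (p = i \<or> p = j \<or> p \<in> N)" for p
    using ijk NP by (auto simp: indicator_def)
  then have x_plus: "?x p = 1 \<longleftrightarrow> p = k \<or> p \<in> P"
    and x_minus: "?x p = -1 \<longleftrightarrow> p = i \<or> p = j \<or> p \<in> N"
    and signs: "?x p \<in> {-1, 0, 1}" for p
    unfolding x_val using ijk NP by auto
  have "N \<subseteq> {1..r}" "P \<subseteq> {1..r}" using NP by auto
  then have "?x \<in> zvec r" "pairing r ?x \<sigma> = \<sigma> k - sum \<sigma> N + sum \<sigma> P - \<sigma> i - \<sigma> j"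
    using ijk by (simp_all add: zvec_add zvec_diff indicator_in_zvec pairing_add_left
        pairing_diff_left pairing_indicator_left)
  then have "?x \<in> orth_lattice r \<sigma>"
    using balanced unfolding orth_lattice_def by simp
  moreover have "{q \<in> {1..r}. q \<noteq> k \<and> ?x q = 1} = P"
    using x_plus NP by auto
  ultimately show ?thesis
  proof (intro orth_irreducible_sign_vector[where k = k])
    show "?x k = 1" using x_plus by blast
    fix p assume "?x p = -1"
    then show "sum \<sigma> {q \<in> {1..r}. q \<noteq> k \<and> ?x q = 1} < \<sigma> p"
      if "{q \<in> {1..r}. q \<noteq> k \<and> ?x q = 1} = P"
      using that x_minus small by auto
  qed (use ijk signs pos in auto)
qed

section \<open>Changemaker vectors\<close>

lemma changemaker_mono:
  assumes "changemaker r \<sigma>" "1 \<le> i" "i \<le> j" "j \<le> r"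
  shows "\<sigma> i \<le> \<sigma> j"
  using assms(3,4)
proof (induction j rule: dec_induct)
  case (step n)
  then have "Suc n \<in> {2..r}" using assms(2) by auto
  then have "\<sigma> (Suc n - 1) \<le> \<sigma> (Suc n)"
    using assms(1) unfolding changemaker_def by blast
  then show ?case using step by simp
qed simp

lemma changemaker_pos:
  assumes "changemaker r \<sigma>" "p \<in> {1..r}"
  shows "0 < \<sigma> p"
  using changemaker_mono[OF assms(1), of 1 p] assms unfolding changemaker_def by auto

lemma changemaker_le_sum:
  assumes "changemaker r \<sigma>" "j \<in> {1..r}"
  shows "\<sigma> j \<le> 1 + sum \<sigma> {1..<j}"
  using assms unfolding changemaker_def by (cases "j = 1") auto

lemma changemaker_subset_sum:
  assumes "changemaker r \<sigma>" "j \<le> r" "0 \<le> n" "n \<le> sum \<sigma> {1..<j}"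
  shows "\<exists>S \<subseteq> {1..<j}. sum \<sigma> S = n"
  using assms(2-4)
proof (induction j arbitrary: n)
  case 0
  then show ?case by auto
next
  case (Suc j)
  show ?case
  proof (cases "j = 0 \<or> n \<le> sum \<sigma> {1..<j}")
    case True
    then obtain S where "S \<subseteq> {1..<j}" "sum \<sigma> S = n" using Suc by auto
    moreover have "{1..<j} \<subseteq> {1..<Suc j}" by auto
    ultimately show ?thesis by blast
  next
    case False
    then have split: "{1..<Suc j} = insert j {1..<j}" by auto
    have "\<sigma> j \<le> 1 + sum \<sigma> {1..<j}"
      using changemaker_le_sum[OF assms(1), of j] False Suc.prems(1) by auto
    then have "0 \<le> n - \<sigma> j" "n - \<sigma> j \<le> sum \<sigma> {1..<j}"
      using Suc.prems(3) False unfolding split by simp_all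
    then obtain S where S: "S \<subseteq> {1..<j}" "sum \<sigma> S = n - \<sigma> j"
      using Suc.IH Suc.prems(1) by (meson Suc_leD)
    moreover have "finite S" "j \<notin> S" using S(1) finite_subset by auto
    ultimately have "sum \<sigma> (insert j S) = n" by simp
    moreover have "insert j S \<subseteq> {1..<Suc j}" using S(1) split by auto
    ultimately show ?thesis by blast
  qed
qed

lemma changemaker_block_prefix_sum:
  assumes cm: "changemaker r \<sigma>" and b: "b \<in> {1..r}"
    and block: "\<And>i. i < m + 4 \<Longrightarrow> \<sigma> (b + i) = \<sigma> b"
    and \<rho>: "0 \<le> \<rho>" "\<rho> < \<sigma> b"
  obtains N where "N \<subseteq> {1..<b} \<union> {b + 4..<b + m + 4}" "sum \<sigma> N = int m * \<sigma> b + \<rho>"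
proof -
  obtain R where R: "R \<subseteq> {1..<b}" "sum \<sigma> R = \<rho>"
    using changemaker_subset_sum[OF cm, of b \<rho>] changemaker_le_sum[OF cm b] \<rho> b by auto
  define Q where "Q = {b + 4..<b + m + 4}"
  have Q_block: "\<sigma> p = \<sigma> b" if "p \<in> Q" for p
    using that block[of "p - b"] unfolding Q_def by auto
  have "sum \<sigma> Q = int m * \<sigma> b"
    by (simp add: Q_block Q_def)
  moreover have "Q \<inter> R = {}" unfolding Q_def using R(1) by auto
  ultimately have "sum \<sigma> (Q \<union> R) = int m * \<sigma> b + \<rho>"
    using R by (simp add: sum.union_disjoint finite_subset Q_def)
  moreover have "Q \<union> R \<subseteq> {1..<b} \<union> {b + 4..<b + m + 4}" using R(1) unfolding Q_def by auto
  ultimately show ?thesis using that by blast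
qed

lemma int_div_between_bounds:
  fixes s t :: int
  assumes s: "0 < s" and t: "s < t" "t < (int l - 1) * s"
  shows "1 \<le> t div s" "t div s \<le> int l - 2"
proof -
  have t_eq: "t = t div s * s + t mod s" and "0 \<le> t mod s" "t mod s < s"
    using s by simp_all
  show "1 \<le> t div s"
  proof (rule ccontr)
    assume "\<not> 1 \<le> t div s"
    then have "t div s * s \<le> 0" using s by (simp add: mult_nonpos_nonneg)
    then show False using t(1) t_eq \<open>t mod s < s\<close> by linarith
  qed
  show "t div s \<le> int l - 2"
  proof (rule ccontr)
    assume "\<not> t div s \<le> int l - 2"
    then have "(int l - 1) * s \<le> t div s * s" using s by (simp add: mult_right_mono)
    then show False using t(2) t_eq \<open>0 \<le> t mod s\<close> by linarith
  qed
qed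

text \<open>Write t = q s + \<rho> with s the common value on the block. If q \<ge> 2 the excess over 2 s is
  paid with q - 2 further block entries and a subset of the entries before the block; if q = 1
  the deficit 2 s - t < s is paid with entries before the block.\<close>

lemma changemaker_balancing_sets:
  assumes cm: "changemaker r \<sigma>" and b: "1 \<le> b" "0 < l" "b + l - 1 \<le> r"
    and block: "\<And>i. i < l \<Longrightarrow> \<sigma> (b + i) = \<sigma> b"
    and t: "\<sigma> b < t" "t < (int l - 1) * \<sigma> b"
  obtains N P where "N \<subseteq> {1..<b} \<union> {b + 4..<b + l}" "P \<subseteq> {1..<b}" "N \<inter> P = {}"
    "t + sum \<sigma> P = 2 * \<sigma> b + sum \<sigma> N" "sum \<sigma> P < \<sigma> b" "\<And>p. p \<in> N \<Longrightarrow> sum \<sigma> P < \<sigma> p"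
proof -
  define s where "s = \<sigma> b"
  have b_r: "b \<in> {1..r}" using b by auto
  have s_pos: "0 < s" unfolding s_def using changemaker_pos[OF cm b_r] .
  define q where "q = t div s"
  define \<rho> where "\<rho> = t mod s"
  have t_eq: "t = q * s + \<rho>" and \<rho>: "0 \<le> \<rho>" "\<rho> < s"
    unfolding q_def \<rho>_def using s_pos by simp_all
  have "1 \<le> q" "q \<le> int l - 2"
    using int_div_between_bounds[OF s_pos] t unfolding q_def s_def by auto
  show ?thesis
  proof (cases "2 \<le> q")
    case True
    then obtain N where N: "N \<subseteq> {1..<b} \<union> {b + 4..<b + nat (q - 2) + 4}"
      "sum \<sigma> N = int (nat (q - 2)) * s + \<rho>"
      using changemaker_block_prefix_sum[OF cm b_r, of "nat (q - 2)" \<rho>] block \<rho> \<open>q \<le> int l - 2\<close>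
      unfolding s_def by auto
    show ?thesis
    proof (rule that[of N "{}"])
      have "{1..<b} \<union> {b + 4..<b + nat (q - 2) + 4} \<subseteq> {1..<b} \<union> {b + 4..<b + l}"
        using \<open>q \<le> int l - 2\<close> True by auto
      then show "N \<subseteq> {1..<b} \<union> {b + 4..<b + l}" using N(1) by blast
      then have "p \<in> {1..r}" if "p \<in> N" for p using that b by fastforce
      then show "sum \<sigma> {} < \<sigma> p" if "p \<in> N" for p
        using changemaker_pos[OF cm] that by simp
      show "t + sum \<sigma> {} = 2 * \<sigma> b + sum \<sigma> N"
        using N(2) t_eq True unfolding s_def by (simp add: algebra_simps)
    qed (use s_pos in \<open>simp_all add: s_def\<close>)
  next
    case False
    then have "q = 1" using \<open>1 \<le> q\<close> by simp
    then have "0 < \<rho>" using t(1) t_eq unfolding s_def by simp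
    obtain P where P: "P \<subseteq> {1..<b}" "sum \<sigma> P = 2 * s - t"
      using changemaker_subset_sum[OF cm, of b "2 * s - t"] changemaker_le_sum[OF cm b_r]
        \<open>q = 1\<close> t_eq \<rho> \<open>0 < \<rho>\<close> b_r unfolding s_def by auto
    show ?thesis
    proof (rule that[of "{}" P])
      show "sum \<sigma> P < \<sigma> b" using P(2) t_eq \<open>q = 1\<close> \<open>0 < \<rho>\<close> unfolding s_def by simp
      show "t + sum \<sigma> P = 2 * \<sigma> b + sum \<sigma> {}" using P(2) unfolding s_def by simp
    qed (use P(1) in auto)
  qed
qed

section \<open>Almost constant functions\<close>

lemma almost_constant_on_cong_diff:
  assumes "\<And>u w. u \<in> U \<Longrightarrow> w \<in> U \<Longrightarrow> f u - f w = f' u - f' w"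
  shows "almost_constant_on U f \<longleftrightarrow> almost_constant_on U f'"
  using assms unfolding almost_constant_on_def by metis

lemma total_on_four_obtains_path:
  fixes P :: "nat \<Rightarrow> nat \<Rightarrow> bool"
  assumes total: "\<And>i j. i < 4 \<Longrightarrow> j < 4 \<Longrightarrow> i \<noteq> j \<Longrightarrow> P i j \<or> P j i"
  obtains p q r s where "p < 4" "q < 4" "r < 4" "s < 4" "P p q" "P q r" "P r s"
proof -
  have "\<exists>a b. a < 2 \<and> b < (2 :: nat) \<and> P a b" using total[of 0 1] by force
  then obtain a b where ab: "a < 2" "b < 2" "P a b" by blast
  obtain x y z where xyz: "x < 3" "y < 3" "z < 3" "P x y" "P y z"
  proof (cases "P 2 a")
    case True
    then show ?thesis using that[of 2 a b] ab by simp
  next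
    case False
    then have "P a 2" using total[of a 2] ab by auto
    then show ?thesis
      using that[of a b 2] that[of a 2 b] ab total[of b 2] by force
  qed
  consider "P 3 x" | "P x 3" "P 3 y" | "P y 3" "P 3 z" | "P z 3"
    using total[of 3 x] total[of 3 y] total[of 3 z] xyz by force
  then show ?thesis
  proof cases
    case 1 then show ?thesis using that[of 3 x y z] xyz by simp
  next
    case 2 then show ?thesis using that[of x 3 y z] xyz by simp
  next
    case 3 then show ?thesis using that[of x y 3 z] xyz by simp
  next
    case 4 then show ?thesis using that[of x y z 3] xyz by simp
  qed
qed

text \<open>After sorting, four almost constant differences h_p - h_q, h_q - h_r, h_r - h_s become,
  up to constants, indicators X, Y, Z of disjoint nonempty sets; G stands for g - 2 h_s.\<close>

lemma almost_constant_chain: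
  fixes X Y Z G :: "'a \<Rightarrow> int"
  assumes u0: "u0 \<in> U" "X u0 = 0" "Y u0 = 0" "Z u0 = 0" "G u0 = 0"
    and bits: "\<And>u. u \<in> U \<Longrightarrow> 0 \<le> X u \<and> 0 \<le> Y u \<and> 0 \<le> Z u \<and> X u + Y u + Z u \<le> 1"
    and nonzero: "\<exists>u\<in>U. X u \<noteq> 0" "\<exists>u\<in>U. Y u \<noteq> 0" "\<exists>u\<in>U. Z u \<noteq> 0"
    and pq: "almost_constant_on U (\<lambda>u. G u - X u - 2 * Y u - 2 * Z u)"
    and rs: "almost_constant_on U (\<lambda>u. G u - Z u)"
    and qr: "almost_constant_on U (\<lambda>u. G u - Y u - 2 * Z u)"
    and ps: "almost_constant_on U (\<lambda>u. G u - X u - Y u - Z u)"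
  shows "(\<forall>u\<in>U. G u = Y u + Z u) \<or> (\<forall>u\<in>U. G u = X u + Y u + 2 * Z u)"
proof -
  obtain z1 where z1: "z1 \<in> U" "X z1 = 1" "Y z1 = 0" "Z z1 = 0"
    using nonzero(1) bits by fastforce
  obtain z2 where z2: "z2 \<in> U" "X z2 = 0" "Y z2 = 1" "Z z2 = 0"
    using nonzero(2) bits by fastforce
  obtain z3 where z3: "z3 \<in> U" "X z3 = 0" "Y z3 = 0" "Z z3 = 1"
    using nonzero(3) bits by fastforce
  note pq' = pq[unfolded almost_constant_on_def, rule_format]
    and rs' = rs[unfolded almost_constant_on_def, rule_format]
    and qr' = qr[unfolded almost_constant_on_def, rule_format]
    and ps' = ps[unfolded almost_constant_on_def, rule_format]
  have G_z2: "G z2 = 1"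
    using pq'[OF z2(1) u0(1)] rs'[OF z2(1) u0(1)] z2 u0 by simp
  have G_z1: "G z1 = 0 \<or> G z1 = 1"
    using pq'[OF z1(1) u0(1)] rs'[OF z1(1) u0(1)] z1 u0 by auto
  have "(G z1 = 0 \<and> G u = Y u + Z u) \<or> (G z1 = 1 \<and> G u = X u + Y u + 2 * Z u)"
    if u: "u \<in> U" for u
  proof -
    have "(X u = 0 \<and> Y u = 0 \<and> Z u = 0) \<or> (X u = 1 \<and> Y u = 0 \<and> Z u = 0) \<or>
        (X u = 0 \<and> Y u = 1 \<and> Z u = 0) \<or> (X u = 0 \<and> Y u = 0 \<and> Z u = 1)"
      using bits[OF u] by arith
    then show ?thesis
      using pq'[OF u z2(1)] rs'[OF u z2(1)] pq'[OF u u0(1)] rs'[OF u u0(1)]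
        qr'[OF u z3(1)] ps'[OF u z3(1)] qr'[OF z1(1) z3(1)] ps'[OF z1(1) z3(1)]
        qr'[OF u z1(1)] ps'[OF u z1(1)] z1 z2 z3 u0 G_z1 G_z2
      unfolding abs_le_iff by (elim disjE) auto
  qed
  then show ?thesis using G_z1 by auto
qed

lemma almost_constant_differences_sorted:
  fixes h :: "nat \<Rightarrow> 'a \<Rightarrow> int" and u0 :: 'a
  defines "\<delta> i j u \<equiv> (h i u - h j u) - (h i u0 - h j u0)"
  assumes u0: "u0 \<in> U"
    and diff: "\<And>i j. i < 4 \<Longrightarrow> j < 4 \<Longrightarrow> almost_constant_on U (\<lambda>u. h i u - h j u)"
    and diff_nonconst: "\<And>i j. i < 4 \<Longrightarrow> j < 4 \<Longrightarrow> i \<noteq> j \<Longrightarrow>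
      \<exists>u\<in>U. \<exists>w\<in>U. h i u - h j u \<noteq> h i w - h j w"
  obtains p q r s where "p < 4" "q < 4" "r < 4" "s < 4" "distinct [p, q, r, s]"
    "\<And>u. u \<in> U \<Longrightarrow> 0 \<le> \<delta> p q u \<and> 0 \<le> \<delta> q r u \<and> 0 \<le> \<delta> r s u \<and>
      \<delta> p q u + \<delta> q r u + \<delta> r s u \<le> 1"
    "\<exists>u\<in>U. \<delta> p q u \<noteq> 0" "\<exists>u\<in>U. \<delta> q r u \<noteq> 0" "\<exists>u\<in>U. \<delta> r s u \<noteq> 0"
proof -
  define above where "above i j \<longleftrightarrow> (\<exists>u\<in>U. 0 < \<delta> i j u)" for i j
  have \<delta>_bound: "\<bar>\<delta> i j u - \<delta> i j w\<bar> \<le> 1" if "i < 4" "j < 4" "u \<in> U" "w \<in> U" for i j u w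
  proof -
    have "\<delta> i j u - \<delta> i j w = (h i u - h j u) - (h i w - h j w)" unfolding \<delta>_def by simp
    then show ?thesis using diff[OF that(1,2)] that(3,4) unfolding almost_constant_on_def by simp
  qed
  have \<delta>_nonneg: "0 \<le> \<delta> i j u" if "i < 4" "j < 4" "above i j" "u \<in> U" for i j u
    using that \<delta>_bound unfolding above_def by force
  have above_total: "above i j \<or> above j i" if ij: "i < 4" "j < 4" "i \<noteq> j" for i j
  proof -
    obtain u w where "u \<in> U" "w \<in> U" "h i u - h j u \<noteq> h i w - h j w"
      using diff_nonconst[OF ij] by blast
    then have "\<delta> i j u \<noteq> 0 \<or> \<delta> i j w \<noteq> 0" unfolding \<delta>_def by auto
    then obtain t where "t \<in> U" "\<delta> i j t \<noteq> 0" using \<open>u \<in> U\<close> \<open>w \<in> U\<close> by blast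
    moreover have "\<delta> j i t = - \<delta> i j t" unfolding \<delta>_def by simp
    ultimately show ?thesis unfolding above_def by (metis neg_0_less_iff_less linorder_neqE)
  qed
  have above_trans: "above i k" if "i < 4" "j < 4" "k < 4" "above i j" "above j k" for i j k
  proof -
    obtain u where "u \<in> U" "0 < \<delta> i j u" using \<open>above i j\<close> unfolding above_def by blast
    moreover have "\<delta> i k u = \<delta> i j u + \<delta> j k u" unfolding \<delta>_def by simp
    ultimately show ?thesis using \<delta>_nonneg[OF that(2,3,5)] unfolding above_def by force
  qed
  have above_irrefl: "\<not> above i i" for i unfolding above_def \<delta>_def by simp
  obtain p q r s where pqrs: "p < 4" "q < 4" "r < 4" "s < 4" "above p q" "above q r" "above r s"
    using total_on_four_obtains_path[of above] above_total by blast
  have "above p r" "above q s" using above_trans pqrs by blast+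
  then have "above p s" using above_trans pqrs by blast
  then have "distinct [p, q, r, s]"
    using above_irrefl pqrs \<open>above p r\<close> \<open>above q s\<close> by auto
  moreover have "\<delta> p q u + \<delta> q r u + \<delta> r s u \<le> 1" if "u \<in> U" for u
    using \<delta>_bound[OF pqrs(1,4) that u0] unfolding \<delta>_def by simp
  moreover have "\<exists>u\<in>U. \<delta> i j u \<noteq> 0" if "above i j" for i j
    using that unfolding above_def by force
  ultimately show ?thesis
    using that[OF pqrs(1-4)] \<delta>_nonneg pqrs by simp
qed

lemma almost_constant_four_obtains_constant_pair:
  fixes h :: "nat \<Rightarrow> 'a \<Rightarrow> int" and g :: "'a \<Rightarrow> int"
  assumes u0: "u0 \<in> U"
    and diff: "\<And>i j. i < 4 \<Longrightarrow> j < 4 \<Longrightarrow> almost_constant_on U (\<lambda>u. h i u - h j u)"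
    and diff_nonconst: "\<And>i j. i < 4 \<Longrightarrow> j < 4 \<Longrightarrow> i \<noteq> j \<Longrightarrow>
      \<exists>u\<in>U. \<exists>w\<in>U. h i u - h j u \<noteq> h i w - h j w"
    and pair: "\<And>a c. a < 4 \<Longrightarrow> c < 4 \<Longrightarrow> a \<noteq> c \<Longrightarrow>
      almost_constant_on U (\<lambda>u. g u - h a u - h c u)"
  obtains a c where "a < 4" "c < 4" "a \<noteq> c"
    "\<And>u w. u \<in> U \<Longrightarrow> w \<in> U \<Longrightarrow> g u - h a u - h c u = g w - h a w - h c w"
proof -
  define \<delta> where "\<delta> i j u = (h i u - h j u) - (h i u0 - h j u0)" for i j u
  show ?thesis
  proof (rule almost_constant_differences_sorted[where h = h and U = U,
        OF u0 diff diff_nonconst, folded \<delta>_def])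
    fix p q r s assume pqrs: "p < 4" "q < 4" "r < 4" "s < 4" "distinct [p, q, r, s]"
      and chain: "\<And>u. u \<in> U \<Longrightarrow> 0 \<le> \<delta> p q u \<and> 0 \<le> \<delta> q r u \<and> 0 \<le> \<delta> r s u \<and>
        \<delta> p q u + \<delta> q r u + \<delta> r s u \<le> 1"
      and nonzero: "\<exists>u\<in>U. \<delta> p q u \<noteq> 0" "\<exists>u\<in>U. \<delta> q r u \<noteq> 0" "\<exists>u\<in>U. \<delta> r s u \<noteq> 0"
    define G where "G u = (g u - 2 * h s u) - (g u0 - 2 * h s u0)" for u
    have shift: "almost_constant_on U (\<lambda>u. g u - h a u - h c u) \<longleftrightarrow> almost_constant_on U F"
      if "\<And>u w. g u - h a u - h c u - (g w - h a w - h c w) = F u - F w" for a c F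
      using that by (intro almost_constant_on_cong_diff)
    have "(\<forall>u\<in>U. G u = \<delta> q r u + \<delta> r s u) \<or>
        (\<forall>u\<in>U. G u = \<delta> p q u + \<delta> q r u + 2 * \<delta> r s u)"
    proof (rule almost_constant_chain[OF u0 _ _ _ _ chain nonzero])
      show "almost_constant_on U (\<lambda>u. G u - \<delta> p q u - 2 * \<delta> q r u - 2 * \<delta> r s u)"
        using pair[of p q] pqrs shift[of p q] unfolding G_def \<delta>_def by (simp add: algebra_simps)
      show "almost_constant_on U (\<lambda>u. G u - \<delta> r s u)"
        using pair[of r s] pqrs shift[of r s] unfolding G_def \<delta>_def by (simp add: algebra_simps)
      show "almost_constant_on U (\<lambda>u. G u - \<delta> q r u - 2 * \<delta> r s u)"
        using pair[of q r] pqrs shift[of q r] unfolding G_def \<delta>_def by (simp add: algebra_simps)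
      show "almost_constant_on U (\<lambda>u. G u - \<delta> p q u - \<delta> q r u - \<delta> r s u)"
        using pair[of p s] pqrs shift[of p s] unfolding G_def \<delta>_def by (simp add: algebra_simps)
    qed (simp_all add: G_def \<delta>_def)
    then show ?thesis
    proof
      assume H: "\<forall>u\<in>U. G u = \<delta> q r u + \<delta> r s u"
      have "g u - h q u - h s u = g w - h q w - h s w" if "u \<in> U" "w \<in> U" for u w
        using H[rule_format, OF that(1)] H[rule_format, OF that(2)] unfolding G_def \<delta>_def by linarith
      moreover have "q \<noteq> s" using pqrs(5) by auto
      ultimately show ?thesis using pqrs(2,4) that[of q s] by blast
    next
      assume H: "\<forall>u\<in>U. G u = \<delta> p q u + \<delta> q r u + 2 * \<delta> r s u"
      have "g u - h p u - h r u = g w - h p w - h r w" if "u \<in> U" "w \<in> U" for u w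
        using H[rule_format, OF that(1)] H[rule_format, OF that(2)] unfolding G_def \<delta>_def
        by (simp add: algebra_simps)
      moreover have "p \<noteq> r" using pqrs(5) by auto
      ultimately show ?thesis using pqrs(1,3) that[of p r] by blast
    qed
  qed
qed

context orth_superbase
begin

lemma lincomb_coeffs_of_pair_vectors:
  fixes e :: "nat \<Rightarrow> nat \<Rightarrow> int" and w :: "nat \<Rightarrow> int"
  assumes diff: "\<And>a. a < n \<Longrightarrow> e a - e 0 \<in> orth_lattice r \<sigma>"
    and pair: "w - e 0 - e 1 \<in> orth_lattice r \<sigma>" and n: "1 < n"
  obtains h g where "\<And>a c. a < n \<Longrightarrow> c < n \<Longrightarrow> lincomb U (h a - h c) v = e a - e c"
    "\<And>a c. a < n \<Longrightarrow> c < n \<Longrightarrow> lincomb U (g - h a - h c) v = w - e a - e c"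
proof -
  obtain h where h: "\<And>a. a < n \<Longrightarrow> e a - e 0 = lincomb U (h a) v"
    using spanning[OF diff] by metis
  have "w - e 0 - e 0 = (w - e 0 - e 1) + (e 1 - e 0)" by simp
  then have "w - e 0 - e 0 \<in> orth_lattice r \<sigma>"
    using orth_lattice_add[OF pair diff[OF n]] by simp
  then obtain g where g: "w - e 0 - e 0 = lincomb U g v" using spanning by blast
  show ?thesis
  proof (rule that[of h g])
    fix a c assume ac: "a < n" "c < n"
    show "lincomb U (h a - h c) v = e a - e c"
      unfolding lincomb_diff h[OF ac(1), symmetric] h[OF ac(2), symmetric] by simp
    show "lincomb U (g - h a - h c) v = w - e a - e c"
      unfolding lincomb_diff h[OF ac(1), symmetric] h[OF ac(2), symmetric] g[symmetric]
      by (simp add: algebra_simps)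
  qed
qed

end

context connected_orth_superbase
begin

lemma pair_vectors_not_all_irreducible:
  fixes i :: "nat \<Rightarrow> nat" and w :: "nat \<Rightarrow> int"
  assumes diff: "\<And>a c. a < 4 \<Longrightarrow> c < 4 \<Longrightarrow> a \<noteq> c \<Longrightarrow>
      orth_irreducible r \<sigma> (indicator {i a} - indicator {i c})"
    and pair: "\<And>a c. a < 4 \<Longrightarrow> c < 4 \<Longrightarrow> a \<noteq> c \<Longrightarrow>
      orth_irreducible r \<sigma> (w - indicator {i a} - indicator {i c})"
  shows False
proof -
  define e :: "nat \<Rightarrow> nat \<Rightarrow> int" where "e a = indicator {i a}" for a
  have irr_nonzero: "x \<noteq> 0" and irr_orth: "x \<in> orth_lattice r \<sigma>" if "orth_irreducible r \<sigma> x" for x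
    using that unfolding orth_irreducible_def by auto
  have "e a - e 0 \<in> orth_lattice r \<sigma>" if "a < 4" for a
    using zero_in_orth_lattice irr_orth[OF diff[OF that, of 0]] unfolding e_def
    by (cases "a = 0") simp_all
  moreover have "w - e 0 - e 1 \<in> orth_lattice r \<sigma>"
    using irr_orth[OF pair[of 0 1]] unfolding e_def by simp
  ultimately obtain h g
    where rep_diff: "\<And>a c. a < 4 \<Longrightarrow> c < 4 \<Longrightarrow> lincomb U (h a - h c) v = e a - e c"
      and rep_pair: "\<And>a c. a < 4 \<Longrightarrow> c < 4 \<Longrightarrow> lincomb U (g - h a - h c) v = w - e a - e c"
    using lincomb_coeffs_of_pair_vectors[where n = 4] by (metis one_less_numeral_iff semiring_norm(76))
  have "U \<noteq> {}"
  proof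
    assume "U = {}"
    then have "e 0 - e 1 = 0" using rep_diff[of 0 1] unfolding lincomb_def by (simp add: zero_fun_def)
    then show False using irr_nonzero[OF diff[of 0 1]] unfolding e_def by simp
  qed
  then obtain u0 where "u0 \<in> U" by blast
  then obtain a c where ac: "a < 4" "c < 4" "a \<noteq> c"
    and const: "\<And>u u'. u \<in> U \<Longrightarrow> u' \<in> U \<Longrightarrow> g u - h a u - h c u = g u' - h a u' - h c u'"
  proof (rule almost_constant_four_obtains_constant_pair)
    fix a c :: nat assume ac: "a < 4" "c < 4"
    show "almost_constant_on U (\<lambda>u. h a u - h c u)"
    proof (cases "a = c")
      case False
      show ?thesis
        using orth_irreducible_coeffs_almost_constant[OF diff[OF ac False] rep_diff[OF ac, symmetric, unfolded e_def]]
        unfolding fun_diff_def .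
    qed (simp add: almost_constant_on_def)
    show "\<exists>u\<in>U. \<exists>u'\<in>U. h a u - h c u \<noteq> h a u' - h c u'" if "a \<noteq> c"
      using lincomb_nonzero_imp_nonconstant[of "h a - h c"] rep_diff[OF ac]
        irr_nonzero[OF diff[OF ac that]] unfolding e_def by simp
    show "almost_constant_on U (\<lambda>u. g u - h a u - h c u)" if "a \<noteq> c"
      using orth_irreducible_coeffs_almost_constant[OF pair[OF ac that] rep_pair[OF ac, symmetric, unfolded e_def]]
      unfolding fun_diff_def .
  qed blast
  then have "(g - h a - h c) u = (g - h a - h c) u'" if "u \<in> U" "u' \<in> U" for u u'
    unfolding minus_apply using that by blast
  then have "lincomb U (g - h a - h c) v = 0" by (rule lincomb_constant_eq_0)
  then show False using rep_pair[OF ac(1,2)] irr_nonzero[OF pair[OF ac]] unfolding e_def by simp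
qed

end

lemma changemaker_above_block:
  assumes cm: "changemaker r \<sigma>" and bounds: "0 < l" "b + l - 1 \<le> r"
    and block: "\<And>i. i < l \<Longrightarrow> \<sigma> (b + i) = \<sigma> b"
    and k: "k \<in> {1..r}" "\<sigma> b < \<sigma> k"
  shows "b + l - 1 < k"
proof (rule ccontr)
  assume "\<not> b + l - 1 < k"
  then have "\<sigma> k \<le> \<sigma> b"
    using changemaker_mono[OF cm, of k b] block[of "k - b"] k(1) bounds by (cases "k < b") auto
  then show False using k(2) by simp
qed

lemma block_indicator_diff_irreducible:
  assumes cm: "changemaker r \<sigma>" and bounds: "4 \<le> l" "1 \<le> b" "b + l - 1 \<le> r"
    and block: "\<And>i. i < l \<Longrightarrow> \<sigma> (b + i) = \<sigma> b"
    and ac: "a < 4" "c < 4" "a \<noteq> c"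
  shows "orth_irreducible r \<sigma> (indicator {b + a} - indicator {b + c})"
  using ac bounds block[of a] block[of c] changemaker_pos[OF cm]
  by (intro orth_irreducible_indicator_diff) auto

lemma block_pair_vectors_irreducible:
  assumes cm: "changemaker r \<sigma>" and bounds: "4 \<le> l" "1 \<le> b" "b + l - 1 \<le> r"
    and block: "\<And>i. i < l \<Longrightarrow> \<sigma> (b + i) = \<sigma> b"
    and k: "k \<in> {1..r}" "\<sigma> b < \<sigma> k" "\<sigma> k < (int l - 1) * \<sigma> b"
  obtains w where "\<And>a c. a < 4 \<Longrightarrow> c < 4 \<Longrightarrow> a \<noteq> c \<Longrightarrow>
    orth_irreducible r \<sigma> (w - indicator {b + a} - indicator {b + c})"
proof -
  have after: "b + l - 1 < k" using changemaker_above_block[OF cm _ bounds(3) block k(1,2)] bounds by simp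
  obtain N P where NP: "N \<subseteq> {1..<b} \<union> {b + 4..<b + l}" "P \<subseteq> {1..<b}" "N \<inter> P = {}"
    "\<sigma> k + sum \<sigma> P = 2 * \<sigma> b + sum \<sigma> N" "sum \<sigma> P < \<sigma> b" "\<And>p. p \<in> N \<Longrightarrow> sum \<sigma> P < \<sigma> p"
    using changemaker_balancing_sets[OF cm bounds(2) _ bounds(3) block k(2,3)] bounds by auto
  have idx: "b + a \<in> {1..r}" "\<sigma> (b + a) = \<sigma> b" if "a < 4" for a
    using that bounds block[of a] by auto
  have outside: "{1..<b} \<union> {b + 4..<b + l} \<subseteq> {1..r} - {k, b + a, b + c}"
    if "a < 4" "c < 4" for a c
    using that bounds after by auto
  show ?thesis
  proof (rule that[of "indicator {k} - indicator N + indicator P"])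
    fix a c :: nat assume ac: "a < 4" "c < 4" "a \<noteq> c"
    show "orth_irreducible r \<sigma>
        (indicator {k} - indicator N + indicator P - indicator {b + a} - indicator {b + c})"
    proof (rule orth_irreducible_balanced[OF k(1)])
      show "b + a \<in> {1..r}" "b + c \<in> {1..r}" using idx ac by simp_all
      show "k \<noteq> b + a" "k \<noteq> b + c" "b + a \<noteq> b + c" using ac bounds after by auto
      show "N \<subseteq> {1..r} - {k, b + a, b + c}" "P \<subseteq> {1..r} - {k, b + a, b + c}"
        using NP(1,2) outside[OF ac(1,2)] by blast+
      show "\<sigma> k + sum \<sigma> P = \<sigma> (b + a) + \<sigma> (b + c) + sum \<sigma> N"
        using NP(4) idx ac by simp
      show "sum \<sigma> P < \<sigma> (b + a)" "sum \<sigma> P < \<sigma> (b + c)"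
        using NP(5) idx ac by simp_all
    qed (use NP(3,6) changemaker_pos[OF cm] in auto)
  qed
qed

theorem proposition6p2:
  fixes r :: nat and \<sigma> :: "nat \<Rightarrow> int" and l b :: nat
  assumes "changemaker r \<sigma>"
    and "admits_obtuse_superbase r \<sigma>"
    and "l \<ge> 4" and "b > 1" and "b + l - 1 \<le> r"
    and "\<sigma> (b - 1) < \<sigma> b"
    and "\<forall>i\<in>{b..b + l - 1}. \<sigma> i = \<sigma> b"
  shows "\<forall>k\<in>{1..r}. \<sigma> k > \<sigma> b \<longrightarrow> \<sigma> k \<ge> (int l - 1) * \<sigma> b"
proof (intro ballI impI)
  fix k assume k: "k \<in> {1..r}" "\<sigma> b < \<sigma> k"
  have bounds: "4 \<le> l" "1 \<le> b" "b + l - 1 \<le> r" using assms(3-5) by simp_all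
  have block: "\<sigma> (b + i) = \<sigma> b" if "i < l" for i
  proof -
    have "b + i \<in> {b..b + l - 1}" using that by auto
    then show ?thesis using assms(7) by blast
  qed
  show "(int l - 1) * \<sigma> b \<le> \<sigma> k"
  proof (rule ccontr)
    assume "\<not> (int l - 1) * \<sigma> b \<le> \<sigma> k"
    then obtain w where "\<And>a c. a < 4 \<Longrightarrow> c < 4 \<Longrightarrow> a \<noteq> c \<Longrightarrow>
        orth_irreducible r \<sigma> (w - indicator {b + a} - indicator {b + c})"
      using block_pair_vectors_irreducible[OF assms(1) bounds block k] by auto
    moreover obtain U :: "nat set" and v where "connected_orth_superbase r \<sigma> U v"
      using ex_connected_orth_superbase_if_admits[OF assms(2)] .
    ultimately show False
      using connected_orth_superbase.pair_vectors_not_all_irreducible[of r \<sigma> U v "\<lambda>a. b + a" w]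
        block_indicator_diff_irreducible[OF assms(1) bounds block] by simp
  qed
qed

end
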